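(* For every $v\equiv 0\pmod 4$ with $v\geq 12$ there exists a connected symmetric configuration $v_3$ with strong chromatic number exactly 5.
   Context: A symmetric configuration $v_3$ consists of a set of $v$ points and a collection of $v$ blocks, each block being a 3-element subset of the points, such that every point lies in exactly 3 blocks and any two distinct points lie in at most one common block; it is connected if it is not the union of two configurations on disjoint nonempty point sets. A strong colouring is an assignment of colours to points such that the three points of every block receive three distinct colours; the strong chromatic number is the minimum number of colours in a strong colouring. *)

theory Defs
  imports Main
begin

definition sym_config3 :: "'a set \<Rightarrow> 'a set set \<Rightarrow> nat \<Rightarrow> bool" where
  "sym_config3 P B v \<longleftrightarrow>
     finite P \<and> card P = v \<and> card B = v \<and>
     (\<forall>b\<in>B. b \<subseteq> P \<and> card b = 3) \<and>
     (\<forall>x\<in>P. card {b\<in>B. x \<in> b} = 3) \<and>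
     (\<forall>x\<in>P. \<forall>y\<in>P. x \<noteq> y \<longrightarrow> card {b\<in>B. x \<in> b \<and> y \<in> b} \<le> 1)"

definition config_connected :: "'a set \<Rightarrow> 'a set set \<Rightarrow> bool" where
  "config_connected P B \<longleftrightarrow>
     \<not> (\<exists>P1 P2. P1 \<noteq> {} \<and> P2 \<noteq> {} \<and> P1 \<inter> P2 = {} \<and> P1 \<union> P2 = P \<and>
            (\<forall>b\<in>B. b \<subseteq> P1 \<or> b \<subseteq> P2))"

definition strong_colouring :: "'a set \<Rightarrow> 'a set set \<Rightarrow> nat \<Rightarrow> ('a \<Rightarrow> nat) \<Rightarrow> bool" where
  "strong_colouring P B k c \<longleftrightarrow>
     (\<forall>x\<in>P. c x < k) \<and> (\<forall>b\<in>B. inj_on c b)"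

definition strong_chromatic_number :: "'a set \<Rightarrow> 'a set set \<Rightarrow> nat" where
  "strong_chromatic_number P B = (LEAST k. \<exists>c. strong_colouring P B k c)"

end

theory Submission
  imports Defs
begin

text \<open>The configuration lives on \<open>\<int>\<^sub>v\<close>: it consists of the cyclic blocks \<open>{i, i+1, i+3}\<close>,
except that the seven blocks starting at \<open>0, \<dots>, 6\<close> are traded for seven other triples on the
points \<open>0, \<dots>, 9\<close> covering each point as often as the replaced blocks did, chosen so that the five points
\<open>2, \<dots>, 6\<close> become pairwise collinear. So at least five colours are needed. Conversely, since
\<open>4 dvd v\<close>, colouring \<open>x\<close> by \<open>x mod 4\<close> is strong on every cyclic block, and the points of the
trade can be recoloured using a fifth colour. Connectivity holds because the cyclic blocks join
consecutive points.\<close>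

lemma sym_config3_image:
  fixes f :: "'i \<Rightarrow> 'a set"
  assumes "finite P" "card P = v" "finite I" "card I = v"
    and blocks: "\<And>i. i \<in> I \<Longrightarrow> f i \<subseteq> P \<and> card (f i) = 3"
    and "\<And>x. x \<in> P \<Longrightarrow> card {i \<in> I. x \<in> f i} = 3"
    and pairs: "\<And>x y. x \<in> P \<Longrightarrow> y \<in> P \<Longrightarrow> x \<noteq> y \<Longrightarrow> card {i \<in> I. x \<in> f i \<and> y \<in> f i} \<le> 1"
  shows "sym_config3 P (f ` I) v"
proof -
  have inj: "inj_on f I"
  proof (rule inj_onI)
    fix i j assume i: "i \<in> I" and j: "j \<in> I" and eq: "f i = f j"
    have "card (f i) = 3" using blocks[OF i] by simp
    then have "finite (f i)" "\<not> card (f i) \<le> Suc 0" by (auto intro: card_ge_0_finite)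
    then obtain x y where xy: "x \<in> f i" "y \<in> f i" "x \<noteq> y"
      using card_le_Suc0_iff_eq by blast
    have "x \<in> P" "y \<in> P" using blocks[OF i] xy by auto
    then have "card {k \<in> I. x \<in> f k \<and> y \<in> f k} \<le> Suc 0" using pairs xy(3) by simp
    then show "i = j" using i j eq xy \<open>finite I\<close> by (auto simp: card_le_Suc0_iff_eq)
  qed
  have "{b \<in> f ` I. x \<in> b} = f ` {i \<in> I. x \<in> f i}" for x by auto
  moreover have "{b \<in> f ` I. x \<in> b \<and> y \<in> b} = f ` {i \<in> I. x \<in> f i \<and> y \<in> f i}" for x y by auto
  ultimately show ?thesis
    using assms inj card_image[OF inj] card_image[OF inj_on_subset[OF inj]]
    unfolding sym_config3_def by auto
qed

lemma config_connectedI: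
  assumes "p \<in> P"
    and "\<And>Q. p \<in> Q \<Longrightarrow> (\<And>b x y. b \<in> B \<Longrightarrow> x \<in> b \<Longrightarrow> y \<in> b \<Longrightarrow> x \<in> Q \<Longrightarrow> y \<in> Q) \<Longrightarrow> P \<subseteq> Q"
  shows "config_connected P B"
  unfolding config_connected_def
proof (intro notI, elim exE conjE)
  fix P1 P2
  assume ne: "P1 \<noteq> {}" "P2 \<noteq> {}" and disj: "P1 \<inter> P2 = {}" and cover: "P1 \<union> P2 = P"
    and split: "\<forall>b\<in>B. b \<subseteq> P1 \<or> b \<subseteq> P2"
  have closed: "y \<in> Q" if "Q = P1 \<or> Q = P2" "b \<in> B" "x \<in> b" "y \<in> b" "x \<in> Q" for Q b x y
    using that split disj by blast
  consider "p \<in> P1" | "p \<in> P2" using assms(1) cover by blast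
  then show False
  proof cases
    case 1
    then have "P \<subseteq> P1" using assms(2)[of P1] closed by blast
    then show False using ne(2) disj cover by blast
  next
    case 2
    then have "P \<subseteq> P2" using assms(2)[of P2] closed by blast
    then show False using ne(1) disj cover by blast
  qed
qed

lemma strong_colouring_card_le:
  assumes "strong_colouring P B k c" "S \<subseteq> P"
    and collinear: "\<And>x y. x \<in> S \<Longrightarrow> y \<in> S \<Longrightarrow> x \<noteq> y \<Longrightarrow> \<exists>b\<in>B. x \<in> b \<and> y \<in> b"
  shows "card S \<le> k"
proof -
  have "inj_on c S"
  proof (rule inj_onI)
    fix x y assume "x \<in> S" "y \<in> S" "c x = c y"
    then show "x = y" using collinear[of x y] assms(1) unfolding strong_colouring_def inj_on_def by blast
  qed
  then have "card S = card (c ` S)" by (simp add: card_image)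
  also have "\<dots> \<le> card {..<k}"
    using assms(1,2) by (intro card_mono) (auto simp: strong_colouring_def)
  finally show ?thesis by simp
qed

lemma strong_chromatic_number_eqI:
  assumes "strong_colouring P B k c" "S \<subseteq> P" "card S = k"
    and "\<And>x y. x \<in> S \<Longrightarrow> y \<in> S \<Longrightarrow> x \<noteq> y \<Longrightarrow> \<exists>b\<in>B. x \<in> b \<and> y \<in> b"
  shows "strong_chromatic_number P B = k"
  unfolding strong_chromatic_number_def
proof (rule Least_equality)
  show "\<exists>c. strong_colouring P B k c" using assms(1) by blast
  show "k \<le> k'" if "\<exists>c. strong_colouring P B k' c" for k'
    using that strong_colouring_card_le[OF _ assms(2,4)] assms(3) by blast
qed

lemma inj_on_triple: "f a \<noteq> f b \<Longrightarrow> f a \<noteq> f c \<Longrightarrow> f b \<noteq> f c \<Longrightarrow> inj_on f {a, b, c}"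
  by (auto simp: inj_on_def)

definition traded_blocks :: "nat set list" where
  "traded_blocks = [{0,1,7}, {1,3,4}, {2,3,5}, {2,4,6}, {3,6,7}, {4,5,8}, {5,6,9}]"

definition block :: "nat \<Rightarrow> nat \<Rightarrow> nat set" where
  "block v i = (if i < 7 then traded_blocks ! i else {i, (i + 1) mod v, (i + 3) mod v})"

lemma less_7_cases: "(i::nat) < 7 \<Longrightarrow> i \<in> {0, 1, 2, 3, 4, 5, 6}"
  by auto

lemma less_10_cases: "(i::nat) < 10 \<Longrightarrow> i \<in> {0, 1, 2, 3, 4, 5, 6, 7, 8, 9}"
  by auto

lemma add_mod_eq_if:
  fixes i k v :: nat
  assumes "i < v" "k \<le> v"
  shows "(i + k) mod v = (if i + k < v then i + k else i + k - v)"
  using assms by (simp add: mod_if le_mod_geq)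

lemma block_cyclic:
  assumes "7 \<le> i" "i < v"
  shows "block v i = {i, if i + 1 < v then i + 1 else i + 1 - v, if i + 3 < v then i + 3 else i + 3 - v}"
  using assms add_mod_eq_if[of i v 1] add_mod_eq_if[of i v 3] by (simp add: block_def)

lemma block_subset: "i < v \<Longrightarrow> 10 \<le> v \<Longrightarrow> block v i \<subseteq> {..<v}"
  by (cases "i < 7") (auto simp: block_def traded_blocks_def dest!: less_7_cases)

lemma card_block:
  assumes "i < v" "12 \<le> v"
  shows "card (block v i) = 3"
proof (cases "i < 7")
  case True
  then show ?thesis by (auto simp: block_def traded_blocks_def dest!: less_7_cases)
next
  case False
  then show ?thesis using assms by (auto simp: block_cyclic card_insert_if)
qed

lemma mem_block_cyclic:
  assumes "7 \<le> i" "i < v" "x < v"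
  shows "x \<in> block v i \<longleftrightarrow> x = i \<or> x = i + 1 \<or> x + v = i + 1 \<or> x = i + 3 \<or> x + v = i + 3"
  using assms by (auto simp: block_cyclic)

definition blocks_through :: "nat \<Rightarrow> nat \<Rightarrow> nat set" where
  "blocks_through v x = (if 10 \<le> x then {x - 3, x - 1, x} else
     [{0, v - 3, v - 1}, {0, 1, v - 2}, {2, 3, v - 1}, {1, 2, 4}, {1, 3, 5},
      {2, 5, 6}, {3, 4, 6}, {0, 4, 7}, {5, 7, 8}, {6, 8, 9}] ! x)"

lemma blocks_through_eq:
  assumes "x < v" "12 \<le> v"
  shows "{i \<in> {..<v}. x \<in> block v i} = blocks_through v x"
proof -
  have "i < v \<and> x \<in> block v i \<longleftrightarrow> i \<in> blocks_through v x" for i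
  proof (cases "i < 7")
    case True
    then show ?thesis using assms less_10_cases[of x]
      by (auto simp: block_def traded_blocks_def blocks_through_def dest!: less_7_cases; arith)
  next
    case False
    then show ?thesis using assms mem_block_cyclic[of i v x] less_10_cases[of x]
      by (auto simp: blocks_through_def)
  qed
  then show ?thesis by auto
qed

lemma card_blocks_through:
  assumes "x < v" "12 \<le> v"
  shows "card (blocks_through v x) = 3"
proof (cases "10 \<le> x")
  case True
  then show ?thesis by (simp add: blocks_through_def card_insert_if) arith
next
  case False
  then show ?thesis using less_10_cases[of x] assms by (auto simp: blocks_through_def)
qed

lemma mem_blocks_through_ge_10:
  "10 \<le> x \<Longrightarrow> i \<in> blocks_through v x \<longleftrightarrow> x = i \<or> x = i + 1 \<or> x = i + 3"
  by (auto simp: blocks_through_def)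

lemma card_blocks_through_Int:
  assumes "x < v" "y < v" "x \<noteq> y" "12 \<le> v"
  shows "card (blocks_through v x \<inter> blocks_through v y) \<le> 1"
proof -
  \<comment> \<open>With \<open>v = n + 12\<close> the simplifier can compare the truncated differences \<open>v - k\<close>.\<close>
  obtain n where v: "v = n + 12" using assms(4) by (metis add.commute le_Suc_ex)
  have "finite (blocks_through v x)"
    using card_blocks_through[OF assms(1,4)] by (intro card_ge_0_finite) simp
  then have card_le_1_iff: "card (blocks_through v x \<inter> blocks_through v y) \<le> 1 \<longleftrightarrow>
      (\<forall>i \<in> blocks_through v x \<inter> blocks_through v y.
        \<forall>j \<in> blocks_through v x \<inter> blocks_through v y. i = j)"
    by (simp add: card_le_Suc0_iff_eq)
  have mixed: "i = j"
    if "a < 10" "10 \<le> b" "b < v" "i \<in> blocks_through v a \<inter> blocks_through v b"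
      "j \<in> blocks_through v a \<inter> blocks_through v b" for a b i j
    using less_10_cases[OF that(1)] that(2-5) unfolding v mem_blocks_through_ge_10[OF that(2)] Int_iff
    by (elim insertE emptyE) (simp_all add: blocks_through_def, (elim conjE disjE; simp)+)
  consider "x < 10" "y < 10" | "10 \<le> x" "10 \<le> y" | "x < 10" "10 \<le> y" | "10 \<le> x" "y < 10"
    by linarith
  then show ?thesis
  proof cases
    case 1
    then show ?thesis using less_10_cases[OF 1(1)] less_10_cases[OF 1(2)] assms(3) unfolding v
      by (elim insertE emptyE; simp add: blocks_through_def Int_insert_left card_insert_if)
  next
    case 2
    have "i = j" if "i \<in> blocks_through v x \<inter> blocks_through v y"
      "j \<in> blocks_through v x \<inter> blocks_through v y" for i j
      using that assms(3) unfolding Int_iff mem_blocks_through_ge_10[OF 2(1)] mem_blocks_through_ge_10[OF 2(2)]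
      by (elim conjE disjE; simp)
    then show ?thesis unfolding card_le_1_iff by blast
  next
    case 3
    then show ?thesis unfolding card_le_1_iff using mixed[of x y] assms(2) by blast
  next
    case 4
    then show ?thesis unfolding card_le_1_iff using mixed[of y x] assms(1) by blast
  qed
qed

lemma sym_config3_blocks:
  assumes "12 \<le> v"
  shows "sym_config3 {..<v} (block v ` {..<v}) v"
proof (rule sym_config3_image)
  show "block v i \<subseteq> {..<v} \<and> card (block v i) = 3" if "i \<in> {..<v}" for i
    using that assms block_subset card_block by simp
  show "card {i \<in> {..<v}. x \<in> block v i} = 3" if "x \<in> {..<v}" for x
    using that assms blocks_through_eq card_blocks_through by simp
  show "card {i \<in> {..<v}. x \<in> block v i \<and> y \<in> block v i} \<le> 1"
    if "x \<in> {..<v}" "y \<in> {..<v}" "x \<noteq> y" for x y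
  proof -
    have "{i \<in> {..<v}. x \<in> block v i \<and> y \<in> block v i} = blocks_through v x \<inter> blocks_through v y"
      using that assms blocks_through_eq[of x v] blocks_through_eq[of y v] by auto
    then show ?thesis using that assms card_blocks_through_Int by simp
  qed
qed simp_all

lemma config_connected_blocks:
  assumes "12 \<le> v"
  shows "config_connected {..<v} (block v ` {..<v})"
proof (rule config_connectedI)
  show "7 \<in> {..<v}" using assms by simp
  fix Q assume "7 \<in> Q"
    and closed: "\<And>b x y. b \<in> block v ` {..<v} \<Longrightarrow> x \<in> b \<Longrightarrow> y \<in> b \<Longrightarrow> x \<in> Q \<Longrightarrow> y \<in> Q"
  have link: "y \<in> Q" if "i < v" "x \<in> block v i" "y \<in> block v i" "x \<in> Q" for i x y
    using closed that by blast
  have tail: "x \<in> Q" if "7 \<le> x" "x < v" for x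
    using that
  proof (induction x rule: nat_induct_at_least)
    case base
    show ?case using \<open>7 \<in> Q\<close> .
  next
    case (Suc x)
    then have "x \<in> block v x" "Suc x \<in> block v x" using mem_block_cyclic[of x v] by simp_all
    then show ?case using Suc link[of x x "Suc x"] by simp
  qed
  have "block v (v - 1) = {v - 1, 0, 2}" using assms by (simp add: block_cyclic)
  then have "0 \<in> Q" "2 \<in> Q"
    using link[of "v - 1" "v - 1" 0] link[of "v - 1" "v - 1" 2] tail[of "v - 1"] assms by auto
  moreover have "block v 0 = {0, 1, 7}" "block v 1 = {1, 3, 4}" "block v 2 = {2, 3, 5}"
    "block v 3 = {2, 4, 6}"
    by (simp_all add: block_def traded_blocks_def)
  ultimately have small: "x \<in> Q" if "x < 7" for x
    using that link[of 0 0 1] link[of 1 1 3] link[of 1 1 4] link[of 2 2 5] link[of 3 2 6] assms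
    by (auto dest!: less_7_cases)
  show "{..<v} \<subseteq> Q"
  proof
    fix x assume "x \<in> {..<v}"
    then show "x \<in> Q"
      using tail[of x] small[of x] by (cases "x < 7") auto
  qed
qed

definition colour :: "nat \<Rightarrow> nat" where
  "colour x = (if x < 8 then [0, 1, 1, 0, 2, 3, 4, 3] ! x else x mod 4)"

lemma colour_less_5: "colour x < 5"
  using nth_mem[of x "[0, 1, 1, 0, 2, 3, 4, 3 :: nat]"] by (auto simp: colour_def)

lemma colour_mod: "x < 2 \<or> 8 \<le> x \<Longrightarrow> colour x = x mod 4"
  using less_7_cases[of x] by (auto simp: colour_def)

lemma mod_4_cases: "(i::nat) mod 4 \<in> {0, 1, 2, 3}"
  by auto

lemma mod_4_distinct:
  "(i::nat) mod 4 \<noteq> (i + 1) mod 4 \<and> i mod 4 \<noteq> (i + 3) mod 4 \<and> (i + 1) mod 4 \<noteq> (i + 3) mod 4"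
  using mod_4_cases[of i] by (elim insertE emptyE; simp add: mod_Suc mod_add_left_eq[symmetric])

lemma inj_on_colour_block:
  assumes "4 dvd v" "12 \<le> v" "i < v"
  shows "inj_on colour (block v i)"
proof -
  consider "i < 7" | "i = 7" | "i + 1 = v" | "8 \<le> i" "i + 1 < v" using assms(3) by linarith
  then show ?thesis
  proof cases
    case 1
    show ?thesis using less_7_cases[OF 1]
      by (elim insertE emptyE; simp add: block_def traded_blocks_def colour_def)
  next
    case 2
    then have "block v i = {7, 8, 10}" using assms by (simp add: block_cyclic)
    then show ?thesis by (simp add: colour_def)
  next
    case 3
    have "i + 3 - v = 2" using 3 by linarith
    then have "block v i = {i, 0, 2}" using 3 assms by (simp add: block_cyclic)
    moreover have "i mod 4 = 3"
      using mod_4_cases[of i] 3 assms(1) by (elim insertE emptyE; auto simp: mod_Suc dvd_eq_mod_eq_0)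
    then have "colour i = 3" using 3 assms colour_mod[of i] by simp
    moreover have "colour 0 = 0" "colour 2 = 1" by (simp_all add: colour_def)
    ultimately show ?thesis using inj_on_triple[of colour i 0 2] by simp
  next
    case 4
    define k where "k = (if i + 3 < v then i + 3 else i + 3 - v)"
    have k: "k = i + 3 \<or> k + v = i + 3" "k < 2 \<or> 8 \<le> k" using 4 unfolding k_def by auto
    obtain m where m: "v = 4 * m" using assms(1) by (elim dvdE)
    from k(1) have "k mod 4 = (i + 3) mod 4"
    proof
      assume "k + v = i + 3"
      then have "i + 3 = k + 4 * m" using m by simp
      then show ?thesis by simp
    qed simp
    then have "colour k = (i + 3) mod 4" using colour_mod[OF k(2)] by simp
    moreover have "block v i = {i, i + 1, k}" using 4 assms by (simp add: block_cyclic k_def)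
    moreover have "colour i = i mod 4" "colour (i + 1) = (i + 1) mod 4" using 4 colour_mod by simp_all
    ultimately show ?thesis using inj_on_triple[of colour i "i + 1" k] mod_4_distinct[of i] by simp
  qed
qed

lemma strong_chromatic_number_blocks:
  assumes "4 dvd v" "12 \<le> v"
  shows "strong_chromatic_number {..<v} (block v ` {..<v}) = 5"
proof (rule strong_chromatic_number_eqI)
  show "strong_colouring {..<v} (block v ` {..<v}) 5 colour"
    using inj_on_colour_block[OF assms] colour_less_5 unfolding strong_colouring_def by auto
  show "{2, 3, 4, 5, 6} \<subseteq> {..<v}" using assms by auto
  show "card {2, 3, 4, 5, 6 :: nat} = 5" by simp
  show "\<exists>b\<in>block v ` {..<v}. x \<in> b \<and> y \<in> b"
    if "x \<in> {2, 3, 4, 5, 6}" "y \<in> {2, 3, 4, 5, 6}" "x \<noteq> y" for x y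
  proof -
    have "set traded_blocks \<subseteq> block v ` {..<v}"
      using assms by (auto simp: set_conv_nth block_def traded_blocks_def)
    moreover have "\<exists>b\<in>set traded_blocks. x \<in> b \<and> y \<in> b"
      using that by (auto simp: traded_blocks_def)
    ultimately show ?thesis by blast
  qed
qed

theorem mainTheorem19:
  fixes v :: nat
  assumes "v mod 4 = 0" and "v \<ge> 12"
  shows "\<exists>(P :: nat set) (B :: nat set set).
           sym_config3 P B v \<and> config_connected P B \<and>
           strong_chromatic_number P B = 5"
proof -
  have "4 dvd v" using assms(1) by (simp add: dvd_eq_mod_eq_0)
  then show ?thesis
    using sym_config3_blocks config_connected_blocks strong_chromatic_number_blocks assms(2) by blast
qed

end
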